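(* Let $s,t,D\ge1$ be integers and let $\mathcal G=\{G_1,\dots,G_t\}$ be an $s$-joined graph family on $n$ vertices. Let $\mathcal H$ be a rooted $[t]$-edge-colored graph with $\Delta^{mon}(\mathcal H)\le D$ and $|V(\mathcal H)|\le n-2sD-3s$, and let $\mathcal H_0$ be a rooted subgraph obtained from $\mathcal H$ by successively removing non-root vertices of degree $1$ (roots unchanged). If $\phi_0:\mathcal H_0\hookrightarrow\mathcal G$ is a $(2s,D)$-good embedding, then there is a $(2s,D)$-good embedding $\phi:\mathcal H\hookrightarrow\mathcal G$ extending $\phi_0$.
   Context: A graph family $\mathcal G=\{G_1,\dots,G_t\}$ is a collection of $t$ simple graphs on a common finite vertex set $V$, $n=|V|$. For $X\subseteq V\times[t]$, $\Gamma_{\mathcal G}(X)=\bigcup_{(v,i)\in X}\{u\in V:uv\in E(G_i)\}$. The family is $s$-joined if for all $X\subseteq V\times[t]$ and $Y\subseteq V$ with $|X|\ge s$ and $|Y|\ge s$ there exist $(v,i)\in X$ and $y\in Y$ with $vy\in E(G_i)$. A $[t]$-edge-colored graph $\mathcal H$ is a simple graph with each edge colored in $[t]$; $H_i$ is its spanning subgraph of color-$i$ edges, $\deg_{H_i}(h)$ the number of color-$i$ edges at $h$, and $\Delta^{mon}(\mathcal H)=\max_i\max_h\deg_{H_i}(h)$. An embedding $\phi:\mathcal H\hookrightarrow\mathcal G$ is an injective map $V(\mathcal H)\to V$ with $\phi(x)\phi(y)\in E(G_i)$ for every edge $xy$ of color $i$. A rooted $[t]$-edge-colored graph is one with a distinguished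 set of roots such that, after deleting all edges with both ends roots, every connected component is a tree containing exactly one root; for a non-root $h$ the unique path from $h$ to the root set (meeting it only at its last vertex) determines the parent of $h$ (its neighbour on the path) and $c(h)$, the color of the edge from $h$ to its parent. For fixed $D$: $P_\phi(\mathcal H)=\{(\phi(h),c(h)):h\text{ non-root}\}$ and, for $X\subseteq V\times[t]$, $R(X,\phi)=|\Gamma_{\mathcal G}(X)\setminus\phi(V(\mathcal H))|-\sum_{(v,i)\in X}[D-\deg_{H_i}(\phi^{-1}(v))]-|P_\phi(\mathcal H)\cap X|$, with $\deg_{H_i}(\phi^{-1}(v))=0$ if $v\notin\phi(V(\mathcal H))$. The embedding $\phi$ is $(s,D)$-good if $R(X,\phi)\ge0$ for every $X\subseteq V\times[t]$ with $|X|\le s$. An embedding of $\mathcal H$ extends $\phi_0$ if it agrees with $\phi_0$ on $V(\mathcal H_0)$. *)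

theory Defs
  imports Main
begin

text \<open>Colours are {1..t}. A graph family on the finite vertex set V is a map
  G :: nat => 'v => 'v => bool, G i being the (symmetric, irreflexive) edge relation of G_i.\<close>

definition graph_family :: "'v set \<Rightarrow> nat \<Rightarrow> (nat \<Rightarrow> 'v \<Rightarrow> 'v \<Rightarrow> bool) \<Rightarrow> bool" where
  "graph_family V t G \<longleftrightarrow> finite V \<and>
     (\<forall>i\<in>{1..t}. \<forall>u v. G i u v \<longrightarrow> u \<in> V \<and> v \<in> V \<and> u \<noteq> v \<and> G i v u)"

definition Gamma :: "(nat \<Rightarrow> 'v \<Rightarrow> 'v \<Rightarrow> bool) \<Rightarrow> 'v set \<Rightarrow> ('v \<times> nat) set \<Rightarrow> 'v set" where
  "Gamma G V X = (\<Union>(v,i)\<in>X. {u\<in>V. G i u v})"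

definition s_joined :: "'v set \<Rightarrow> nat \<Rightarrow> (nat \<Rightarrow> 'v \<Rightarrow> 'v \<Rightarrow> bool) \<Rightarrow> nat \<Rightarrow> bool" where
  "s_joined V t G s \<longleftrightarrow>
     (\<forall>X Y. X \<subseteq> V \<times> {1..t} \<and> Y \<subseteq> V \<and> card X \<ge> s \<and> card Y \<ge> s \<longrightarrow>
        (\<exists>(v,i)\<in>X. \<exists>y\<in>Y. G i v y))"

definition colored_graph :: "nat \<Rightarrow> 'h set \<Rightarrow> ('h \<Rightarrow> 'h \<Rightarrow> bool) \<Rightarrow> ('h \<Rightarrow> 'h \<Rightarrow> nat) \<Rightarrow> bool" where
  "colored_graph t VH EH col \<longleftrightarrow> finite VH \<and>
     (\<forall>x y. EH x y \<longrightarrow> x \<in> VH \<and> y \<in> VH \<and> x \<noteq> y \<and> EH y x \<and>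
            col x y = col y x \<and> col x y \<in> {1..t})"

definition degc :: "'h set \<Rightarrow> ('h \<Rightarrow> 'h \<Rightarrow> bool) \<Rightarrow> ('h \<Rightarrow> 'h \<Rightarrow> nat) \<Rightarrow> nat \<Rightarrow> 'h \<Rightarrow> nat" where
  "degc VH EH col i h = card {y\<in>VH. EH h y \<and> col h y = i}"

definition deg :: "'h set \<Rightarrow> ('h \<Rightarrow> 'h \<Rightarrow> bool) \<Rightarrow> 'h \<Rightarrow> nat" where
  "deg VH EH h = card {y\<in>VH. EH h y}"

definition max_mono_deg_le :: "'h set \<Rightarrow> ('h \<Rightarrow> 'h \<Rightarrow> bool) \<Rightarrow> ('h \<Rightarrow> 'h \<Rightarrow> nat) \<Rightarrow> nat \<Rightarrow> nat \<Rightarrow> bool" where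
  "max_mono_deg_le VH EH col t D \<longleftrightarrow> (\<forall>i\<in>{1..t}. \<forall>h\<in>VH. degc VH EH col i h \<le> D)"

definition is_cycle :: "('h \<Rightarrow> 'h \<Rightarrow> bool) \<Rightarrow> 'h list \<Rightarrow> bool" where
  "is_cycle E cs \<longleftrightarrow> length cs \<ge> 3 \<and> distinct cs \<and>
     (\<forall>k. Suc k < length cs \<longrightarrow> E (cs ! k) (cs ! Suc k)) \<and> E (last cs) (hd cs)"

definition nonroot_edges :: "('h \<Rightarrow> 'h \<Rightarrow> bool) \<Rightarrow> 'h set \<Rightarrow> 'h \<Rightarrow> 'h \<Rightarrow> bool" where
  "nonroot_edges EH R x y \<longleftrightarrow> EH x y \<and> \<not> (x \<in> R \<and> y \<in> R)"

definition rooted :: "'h set \<Rightarrow> ('h \<Rightarrow> 'h \<Rightarrow> bool) \<Rightarrow> 'h set \<Rightarrow> bool" where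
  "rooted VH EH R \<longleftrightarrow> R \<subseteq> VH \<and>
     \<not> (\<exists>cs. is_cycle (nonroot_edges EH R) cs) \<and>
     (\<forall>x\<in>VH. \<exists>!r. r \<in> R \<and> (nonroot_edges EH R)\<^sup>*\<^sup>* x r)"

definition root_path :: "('h \<Rightarrow> 'h \<Rightarrow> bool) \<Rightarrow> 'h set \<Rightarrow> 'h \<Rightarrow> 'h list \<Rightarrow> bool" where
  "root_path EH R h ps \<longleftrightarrow> ps \<noteq> [] \<and> hd ps = h \<and> last ps \<in> R \<and> distinct ps \<and>
     set (butlast ps) \<inter> R = {} \<and> (\<forall>k. Suc k < length ps \<longrightarrow> EH (ps ! k) (ps ! Suc k))"

definition parent :: "('h \<Rightarrow> 'h \<Rightarrow> bool) \<Rightarrow> 'h set \<Rightarrow> 'h \<Rightarrow> 'h" where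
  "parent EH R h = (THE p. \<exists>ps. root_path EH R h ps \<and> ps ! 1 = p)"

definition pcol :: "('h \<Rightarrow> 'h \<Rightarrow> bool) \<Rightarrow> ('h \<Rightarrow> 'h \<Rightarrow> nat) \<Rightarrow> 'h set \<Rightarrow> 'h \<Rightarrow> nat" where
  "pcol EH col R h = col h (parent EH R h)"

definition embedding :: "'v set \<Rightarrow> (nat \<Rightarrow> 'v \<Rightarrow> 'v \<Rightarrow> bool) \<Rightarrow> 'h set \<Rightarrow> ('h \<Rightarrow> 'h \<Rightarrow> bool)
    \<Rightarrow> ('h \<Rightarrow> 'h \<Rightarrow> nat) \<Rightarrow> ('h \<Rightarrow> 'v) \<Rightarrow> bool" where
  "embedding V G VH EH col \<phi> \<longleftrightarrow> inj_on \<phi> VH \<and> \<phi> ` VH \<subseteq> V \<and>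
     (\<forall>x y. EH x y \<longrightarrow> G (col x y) (\<phi> x) (\<phi> y))"

definition Pset :: "'h set \<Rightarrow> ('h \<Rightarrow> 'h \<Rightarrow> bool) \<Rightarrow> ('h \<Rightarrow> 'h \<Rightarrow> nat) \<Rightarrow> 'h set \<Rightarrow> ('h \<Rightarrow> 'v) \<Rightarrow> ('v \<times> nat) set" where
  "Pset VH EH col R \<phi> = {(\<phi> h, pcol EH col R h) | h. h \<in> VH - R}"

text \<open>deg_{H_i}(phi^{-1}(v)), taken to be 0 if v is not in the image.\<close>
definition deg_pre :: "'h set \<Rightarrow> ('h \<Rightarrow> 'h \<Rightarrow> bool) \<Rightarrow> ('h \<Rightarrow> 'h \<Rightarrow> nat) \<Rightarrow> ('h \<Rightarrow> 'v) \<Rightarrow> nat \<Rightarrow> 'v \<Rightarrow> nat" where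
  "deg_pre VH EH col \<phi> i v =
     (if v \<in> \<phi> ` VH then degc VH EH col i (the_inv_into VH \<phi> v) else 0)"

definition Rval :: "'v set \<Rightarrow> (nat \<Rightarrow> 'v \<Rightarrow> 'v \<Rightarrow> bool) \<Rightarrow> nat \<Rightarrow> 'h set \<Rightarrow> ('h \<Rightarrow> 'h \<Rightarrow> bool)
    \<Rightarrow> ('h \<Rightarrow> 'h \<Rightarrow> nat) \<Rightarrow> 'h set \<Rightarrow> ('h \<Rightarrow> 'v) \<Rightarrow> ('v \<times> nat) set \<Rightarrow> int" where
  "Rval V G D VH EH col R \<phi> X =
     int (card (Gamma G V X - \<phi> ` VH))
     - (\<Sum>(v,i)\<in>X. int D - int (deg_pre VH EH col \<phi> i v))
     - int (card (Pset VH EH col R \<phi> \<inter> X))"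

definition good :: "'v set \<Rightarrow> (nat \<Rightarrow> 'v \<Rightarrow> 'v \<Rightarrow> bool) \<Rightarrow> nat \<Rightarrow> nat \<Rightarrow> nat \<Rightarrow> 'h set
    \<Rightarrow> ('h \<Rightarrow> 'h \<Rightarrow> bool) \<Rightarrow> ('h \<Rightarrow> 'h \<Rightarrow> nat) \<Rightarrow> 'h set \<Rightarrow> ('h \<Rightarrow> 'v) \<Rightarrow> bool" where
  "good V G t s D VH EH col R \<phi> \<longleftrightarrow>
     (\<forall>X. X \<subseteq> V \<times> {1..t} \<and> card X \<le> s \<longrightarrow> Rval V G D VH EH col R \<phi> X \<ge> 0)"

definition induced :: "('h \<Rightarrow> 'h \<Rightarrow> bool) \<Rightarrow> 'h set \<Rightarrow> 'h \<Rightarrow> 'h \<Rightarrow> bool" where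
  "induced EH W x y \<longleftrightarrow> EH x y \<and> x \<in> W \<and> y \<in> W"

inductive leaf_pruned :: "'h set \<Rightarrow> ('h \<Rightarrow> 'h \<Rightarrow> bool) \<Rightarrow> 'h set \<Rightarrow> 'h set \<Rightarrow> bool"
  for VH EH R where
  refl: "leaf_pruned VH EH R VH"
| step: "leaf_pruned VH EH R W \<Longrightarrow> h \<in> W - R \<Longrightarrow> deg W (induced EH W) h = 1
          \<Longrightarrow> leaf_pruned VH EH R (W - {h})"

end

theory Submission
  imports Defs
begin

text \<open>The pruned leaves are re-attached one at a time, in reverse order. For a fixed partial
  embedding, \<open>R(X)\<close> is submodular in \<open>X\<close>, and \<open>s\<close>-joinedness together with the size bound
  gives \<open>R(X) \<ge> 1\<close> whenever \<open>s \<le> |X| \<le> 2s\<close>. Hence the tight sets (\<open>R(X) = 0\<close>) avoiding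
  \<open>a = (\<phi>(p), c)\<close>, where \<open>p\<close> is the neighbour of the new leaf \<open>h\<close> and \<open>c\<close> the colour of \<open>hp\<close>,
  have fewer than \<open>s\<close> elements and are closed under union; let \<open>C\<close> be the largest one. Since
  \<open>R(C \<union> {a}) \<ge> 0\<close>, the vertex \<open>\<phi>(p)\<close> has a free \<open>c\<close>-neighbour \<open>y \<notin> \<Gamma>(C)\<close>. Mapping \<open>h\<close> to \<open>y\<close>
  changes \<open>R(X)\<close> by \<open>[a \<in> X] - [y \<in> \<Gamma>(X)]\<close>, which can only turn \<open>R(X)\<close> negative when \<open>X\<close> is
  tight and avoids \<open>a\<close>, i.e. \<open>X \<subseteq> C\<close>; but then \<open>y \<notin> \<Gamma>(X)\<close>.\<close>

subsection \<open>Root paths and leaf removal\<close>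

lemma root_path_singleton: "x \<in> R \<Longrightarrow> root_path E R x [x]"
  by (simp add: root_path_def)

lemma root_path_drop:
  assumes "root_path E R x ps" "k < length ps"
  shows "root_path E R (ps ! k) (drop k ps)"
  using assms unfolding root_path_def
  by (auto simp: hd_drop_conv_nth last_drop butlast_drop dest: in_set_dropD)

lemma root_path_Cons:
  assumes "root_path E R y ps" "E x y" "x \<notin> set ps" "x \<notin> R"
  shows "root_path E R x (x # ps)"
proof -
  have "ps \<noteq> []" "hd ps = y" using assms(1) by (auto simp: root_path_def)
  with assms show ?thesis unfolding root_path_def
    by (auto simp: nth_Cons' hd_conv_nth) (metis Suc_pred)
qed

lemma root_path_exists:
  assumes "(nonroot_edges E R)\<^sup>*\<^sup>* x r" "r \<in> R"
  shows "\<exists>ps. root_path E R x ps"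
  using assms(1)
proof (induction rule: converse_rtranclp_induct)
  case base
  show ?case using root_path_singleton[OF assms(2)] by blast
next
  case (step x x')
  from step.IH obtain ps where ps: "root_path E R x' ps" ..
  have "E x x'" using step(1) by (simp add: nonroot_edges_def)
  consider "x \<in> R" | "x \<notin> R" "x \<in> set ps" | "x \<notin> R" "x \<notin> set ps" by blast
  then show ?case
  proof cases
    case 1
    show ?thesis using root_path_singleton[OF 1] ..
  next
    case 2
    then obtain k where k: "k < length ps" "ps ! k = x" by (meson in_set_conv_nth)
    have "root_path E R (ps ! k) (drop k ps)" by (rule root_path_drop[OF ps k(1)])
    then show ?thesis unfolding k(2) by blast
  next
    case 3
    then show ?thesis using root_path_Cons[OF ps \<open>E x x'\<close>] by blast
  qed
qed

lemma root_path_induced_iff: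
  assumes "x \<in> W"
  shows "root_path (induced E W) R x ps \<longleftrightarrow> root_path E R x ps \<and> set ps \<subseteq> W"
proof
  assume rp: "root_path (induced E W) R x ps"
  have "set ps \<subseteq> W"
  proof
    fix z assume "z \<in> set ps"
    then obtain j where j: "j < length ps" "ps ! j = z" by (meson in_set_conv_nth)
    show "z \<in> W"
    proof (cases j)
      case 0
      then show ?thesis using assms rp j by (auto simp: root_path_def hd_conv_nth)
    next
      case (Suc i)
      then have "induced E W (ps ! i) (ps ! j)" using rp j unfolding root_path_def by auto
      then show ?thesis using j by (simp add: induced_def)
    qed
  qed
  moreover have "root_path E R x ps" using rp unfolding root_path_def induced_def by auto
  ultimately show "root_path E R x ps \<and> set ps \<subseteq> W" by blast
next
  assume "root_path E R x ps \<and> set ps \<subseteq> W"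
  then show "root_path (induced E W) R x ps"
    unfolding root_path_def induced_def by (meson Suc_lessD nth_mem subsetD)
qed

lemma leaf_unique_neighbour:
  assumes "deg W (induced E W) h = 1"
  obtains p where "\<And>z. induced E W h z \<longleftrightarrow> z = p"
proof -
  obtain p where "{z\<in>W. induced E W h z} = {p}"
    using assms unfolding deg_def by (meson card_1_singletonE)
  then have "induced E W h z \<longleftrightarrow> z = p" for z by (auto simp: induced_def)
  then show ?thesis using that by blast
qed

lemma leaf_not_in_root_path:
  assumes sym: "\<And>a b. E a b \<Longrightarrow> E b a"
    and leaf: "deg W (induced E W) h = 1" "h \<notin> R" and "x \<noteq> h"
    and rp: "root_path (induced E W) R x ps"
  shows "h \<notin> set ps"
proof
  assume "h \<in> set ps"
  then obtain k where k: "k < length ps" "ps ! k = h" by (meson in_set_conv_nth)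
  have ps: "ps \<noteq> []" "hd ps = x" "last ps \<in> R" "distinct ps"
    and edge: "\<And>k. Suc k < length ps \<Longrightarrow> induced E W (ps ! k) (ps ! Suc k)"
    using rp by (auto simp: root_path_def)
  have "k \<noteq> 0" using k ps \<open>x \<noteq> h\<close> by (metis hd_conv_nth)
  moreover have "k \<noteq> length ps - 1" using k ps leaf(2) by (metis last_conv_nth)
  ultimately obtain i where i: "k = Suc i" "Suc k < length ps" using k
    by (metis Suc_lessI diff_Suc_1 not0_implies_Suc)
  \<comment> \<open>an interior vertex of a path has two distinct neighbours on it\<close>
  have "induced E W h (ps ! i)" "induced E W h (ps ! Suc k)"
    using edge[of i] edge[of k] i k sym by (auto simp: induced_def)
  moreover have "ps ! i \<noteq> ps ! Suc k" using ps(4) i by (simp add: nth_eq_iff_index_eq)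
  moreover obtain p where "\<And>z. induced E W h z \<longleftrightarrow> z = p"
    using leaf_unique_neighbour[OF leaf(1)] by blast
  ultimately show False by metis
qed

lemma root_path_remove_leaf:
  assumes "\<And>a b. E a b \<Longrightarrow> E b a" "deg W (induced E W) h = 1" "h \<notin> R" "x \<in> W - {h}"
  shows "root_path (induced E (W - {h})) R x ps \<longleftrightarrow> root_path (induced E W) R x ps"
  using leaf_not_in_root_path[OF assms(1-3), of x ps] assms(4)
  by (auto simp: root_path_induced_iff)

lemma parent_remove_leaf:
  assumes "\<And>a b. E a b \<Longrightarrow> E b a" "deg W (induced E W) h = 1" "h \<notin> R" "x \<in> W - {h}"
  shows "parent (induced E (W - {h})) R x = parent (induced E W) R x"
  unfolding parent_def using root_path_remove_leaf[OF assms] by simp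

lemma parent_of_leaf:
  assumes "h \<notin> R" and nb: "\<And>z. E h z \<longleftrightarrow> z = p"
    and rp: "root_path E R p ps" and "h \<notin> set ps"
  shows "parent E R h = p"
  unfolding parent_def
proof (rule the_equality)
  have "root_path E R h (h # ps)" using root_path_Cons[OF rp] nb assms(1,4) by blast
  moreover have "(h # ps) ! 1 = p" using rp unfolding root_path_def by (simp add: hd_conv_nth[symmetric])
  ultimately show "\<exists>ps. root_path E R h ps \<and> ps ! 1 = p" by blast
next
  fix q assume "\<exists>ps. root_path E R h ps \<and> ps ! 1 = q"
  then obtain qs where qs: "root_path E R h qs" "qs ! 1 = q" by blast
  then have "qs \<noteq> []" "hd qs = h" "last qs \<in> R"
    and edge: "\<And>k. Suc k < length qs \<Longrightarrow> E (qs ! k) (qs ! Suc k)"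
    unfolding root_path_def by auto
  then have "Suc 0 < length qs" using \<open>h \<notin> R\<close> by (cases qs) auto
  then have "E h q" using edge[of 0] qs \<open>hd qs = h\<close> \<open>qs \<noteq> []\<close> by (simp add: hd_conv_nth)
  then show "q = p" using nb by simp
qed

lemma leaf_pruned_subset: "leaf_pruned VH EH R W \<Longrightarrow> W \<subseteq> VH"
  by (induction rule: leaf_pruned.induct) auto

lemma induced_carrier: "colored_graph t VH EH col \<Longrightarrow> induced EH VH = EH"
  unfolding colored_graph_def induced_def by (intro ext) blast

lemma leaf_pruned_root_path:
  assumes cg: "colored_graph t VH EH col" and "rooted VH EH R"
    and "leaf_pruned VH EH R W" "x \<in> W"
  shows "\<exists>ps. root_path (induced EH W) R x ps"
  using assms(3,4)
proof (induction arbitrary: x rule: leaf_pruned.induct)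
  case refl
  then obtain r where "r \<in> R" "(nonroot_edges EH R)\<^sup>*\<^sup>* x r"
    using \<open>rooted VH EH R\<close> unfolding rooted_def by blast
  then show ?case using root_path_exists induced_carrier[OF cg] by metis
next
  case (step W h x)
  have sym: "\<And>a b. EH a b \<Longrightarrow> EH b a" using cg unfolding colored_graph_def by blast
  show ?case using step root_path_remove_leaf[OF sym step.hyps(3)] by blast
qed

subsection \<open>Submodularity and slack of \<open>R\<close>\<close>

lemma Gamma_iff: "u \<in> Gamma G V X \<longleftrightarrow> u \<in> V \<and> (\<exists>(v, i)\<in>X. G i u v)"
  unfolding Gamma_def by auto

lemma Gamma_Un: "Gamma G V (X \<union> Y) = Gamma G V X \<union> Gamma G V Y"
  unfolding Gamma_def by auto

lemma Gamma_mono: "X \<subseteq> Y \<Longrightarrow> Gamma G V X \<subseteq> Gamma G V Y"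
  unfolding Gamma_def by auto

lemma Gamma_subset: "Gamma G V X \<subseteq> V"
  unfolding Gamma_def by auto

lemma card_Un_Diff_submodular:
  assumes "finite A" "finite B" "C \<subseteq> A \<inter> B"
  shows "card (A \<union> B - S) + card (C - S) \<le> card (A - S) + card (B - S)"
proof -
  have "card (A - S) + card (B - S) = card ((A - S) \<union> (B - S)) + card ((A - S) \<inter> (B - S))"
    using assms by (intro card_Un_Int) auto
  moreover have "(A - S) \<union> (B - S) = A \<union> B - S" by auto
  moreover have "card (C - S) \<le> card ((A - S) \<inter> (B - S))"
    using assms by (intro card_mono) auto
  ultimately show ?thesis by simp
qed

lemma Rval_submodular:
  assumes "finite V" "finite X" "finite Y"
  shows "Rval V G D VH EH col R \<phi> (X \<union> Y) + Rval V G D VH EH col R \<phi> (X \<inter> Y)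
       \<le> Rval V G D VH EH col R \<phi> X + Rval V G D VH EH col R \<phi> Y"
proof -
  let ?N = "\<lambda>X. card (Gamma G V X - \<phi> ` VH)"
  let ?g = "\<lambda>(v, i). int D - int (deg_pre VH EH col \<phi> i v)"
  let ?M = "\<lambda>X. card (Pset VH EH col R \<phi> \<inter> X)"
  have "finite (Gamma G V Z)" for Z using assms(1) Gamma_subset finite_subset by metis
  moreover have "Gamma G V (X \<inter> Y) \<subseteq> Gamma G V X \<inter> Gamma G V Y" by (simp add: Gamma_mono)
  ultimately have "?N (X \<union> Y) + ?N (X \<inter> Y) \<le> ?N X + ?N Y"
    unfolding Gamma_Un by (intro card_Un_Diff_submodular)
  moreover have "sum ?g (X \<union> Y) + sum ?g (X \<inter> Y) = sum ?g X + sum ?g Y"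
    using assms by (intro sum.union_inter)
  moreover have "?M (X \<union> Y) + ?M (X \<inter> Y) = ?M X + ?M Y"
  proof -
    let ?P = "Pset VH EH col R \<phi>"
    have "?P \<inter> (X \<union> Y) = (?P \<inter> X) \<union> (?P \<inter> Y)" "?P \<inter> (X \<inter> Y) = (?P \<inter> X) \<inter> (?P \<inter> Y)"
      by auto
    then show ?thesis using card_Un_Int[of "?P \<inter> X" "?P \<inter> Y"] assms by simp
  qed
  ultimately show ?thesis unfolding Rval_def by linarith
qed

lemma Rval_insert_le:
  assumes "finite V" "finite C" "(v, i) \<notin> C"
  shows "Rval V G D VH EH col R \<phi> (insert (v, i) C)
       \<le> Rval V G D VH EH col R \<phi> C + int (card (Gamma G V {(v, i)} - Gamma G V C - \<phi> ` VH))
         - (int D - int (deg_pre VH EH col \<phi> i v))"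
proof -
  let ?N = "\<lambda>X. Gamma G V X - \<phi> ` VH"
  let ?new = "Gamma G V {(v, i)} - Gamma G V C - \<phi> ` VH"
  have fin: "finite (Gamma G V Z)" for Z using assms(1) Gamma_subset finite_subset by metis
  have "?N (insert (v, i) C) \<subseteq> ?N C \<union> ?new"
    using Gamma_Un[of G V "{(v, i)}" C] by auto
  then have "card (?N (insert (v, i) C)) \<le> card (?N C) + card ?new"
    using fin by (meson card_Un_le card_mono finite_Diff finite_UnI le_trans)
  moreover have "(\<Sum>(u, j)\<in>insert (v, i) C. int D - int (deg_pre VH EH col \<phi> j u))
      = (int D - int (deg_pre VH EH col \<phi> i v)) + (\<Sum>(u, j)\<in>C. int D - int (deg_pre VH EH col \<phi> j u))"
    using assms(2,3) by simp
  moreover have "card (Pset VH EH col R \<phi> \<inter> C) \<le> card (Pset VH EH col R \<phi> \<inter> insert (v, i) C)"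
    using assms(2) by (intro card_mono) auto
  ultimately show ?thesis unfolding Rval_def by linarith
qed

lemma Rval_ge_one:
  assumes gf: "graph_family V t G" and sj: "s_joined V t G s" and "finite VH"
    and X: "X \<subseteq> V \<times> {1..t}" "s \<le> card X" "card X \<le> 2 * s"
    and size: "int (card VH) + 2 * int s * int D + 3 * int s \<le> int (card V)"
  shows "Rval V G D VH EH col R \<phi> X \<ge> 1"
proof -
  have fV: "finite V" using gf by (simp add: graph_family_def)
  have fX: "finite X" using X(1) fV by (meson finite_SigmaI finite_atLeastAtMost finite_subset)
  let ?\<Gamma> = "Gamma G V X"
  \<comment> \<open>the vertices outside \<open>?\<Gamma>\<close> have no edge to \<open>X\<close>, so by s-joinedness there are fewer than s\<close>
  have "card (V - ?\<Gamma>) < s"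
  proof (rule ccontr)
    assume "\<not> card (V - ?\<Gamma>) < s"
    then have "\<exists>(a, i)\<in>X. \<exists>y\<in>V - ?\<Gamma>. G i a y"
      using sj X unfolding s_joined_def by auto
    then obtain a i y where ai: "(a, i) \<in> X" and y: "y \<in> V - ?\<Gamma>" and "G i a y"
      by blast
    moreover have "i \<in> {1..t}" using X ai by auto
    ultimately have "G i y a" using gf unfolding graph_family_def by blast
    then show False using y ai by (auto simp: Gamma_iff)
  qed
  moreover have "card (V - ?\<Gamma>) = card V - card ?\<Gamma>"
    using fV Gamma_subset by (metis card_Diff_subset finite_subset)
  moreover have "card ?\<Gamma> \<le> card V" using fV Gamma_subset by (metis card_mono)
  moreover have "card ?\<Gamma> - card (\<phi> ` VH) \<le> card (?\<Gamma> - \<phi> ` VH)"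
    by (rule diff_card_le_card_Diff) (use \<open>finite VH\<close> in auto)
  moreover have "card (\<phi> ` VH) \<le> card VH" by (rule card_image_le[OF \<open>finite VH\<close>])
  ultimately have "int (card (?\<Gamma> - \<phi> ` VH)) \<ge> int (card V) - int s + 1 - int (card VH)"
    by linarith
  moreover have "(\<Sum>(v, i)\<in>X. int D - int (deg_pre VH EH col \<phi> i v)) \<le> 2 * int s * int D"
  proof -
    have "(\<Sum>(v, i)\<in>X. int D - int (deg_pre VH EH col \<phi> i v)) \<le> (\<Sum>(v, i)\<in>X. int D)"
      by (intro sum_mono) auto
    also have "\<dots> = int D * int (card X)" by simp
    also have "\<dots> \<le> 2 * int s * int D" using X(3) by (simp add: mult_left_mono mult.commute)
    finally show ?thesis .
  qed
  moreover have "card (Pset VH EH col R \<phi> \<inter> X) \<le> card X" using fX by (intro card_mono) auto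
  ultimately show ?thesis unfolding Rval_def using X(3) size by linarith
qed

lemma greatest_zero_set_of_submodular:
  fixes f :: "'a set \<Rightarrow> int"
  assumes "finite U" "f {} = 0"
    and submod: "\<And>X Y. X \<subseteq> U \<Longrightarrow> Y \<subseteq> U \<Longrightarrow> f (X \<union> Y) + f (X \<inter> Y) \<le> f X + f Y"
    and nonneg: "\<And>X. X \<subseteq> U \<Longrightarrow> card X \<le> 2 * k \<Longrightarrow> 0 \<le> f X"
    and small: "\<And>X. X \<subseteq> U \<Longrightarrow> card X \<le> 2 * k \<Longrightarrow> f X = 0 \<Longrightarrow> card X < k"
  obtains C where "C \<subseteq> U" "card C < k" "f C = 0"
    "\<And>X. X \<subseteq> U \<Longrightarrow> card X \<le> 2 * k \<Longrightarrow> f X = 0 \<Longrightarrow> X \<subseteq> C"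
proof -
  define Z where "Z = {X. X \<subseteq> U \<and> card X \<le> 2 * k \<and> f X = 0}"
  have "finite Z" unfolding Z_def using \<open>finite U\<close> by auto
  moreover have "{} \<in> Z" unfolding Z_def using \<open>f {} = 0\<close> by simp
  ultimately have "Max (card ` Z) \<in> card ` Z" by (intro Max_in) auto
  then obtain C where C: "C \<in> Z" "card C = Max (card ` Z)" by auto
  have C_max: "card X \<le> card C" if "X \<in> Z" for X
    using C(2) Max_ge \<open>finite Z\<close> that by simp
  have absorb: "X \<subseteq> C" if X: "X \<in> Z" for X
  proof -
    have XC: "X \<subseteq> U" "C \<subseteq> U" "card X < k" "card C < k" "f X = 0" "f C = 0"
      using X C(1) small unfolding Z_def by auto
    have fin: "finite X" "finite C" using XC \<open>finite U\<close> finite_subset by auto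
    have card_Un: "card (X \<union> C) \<le> 2 * k" using card_Un_le[of X C] XC by linarith
    have "card (X \<inter> C) \<le> 2 * k" using card_mono[OF fin(1) Int_lower1, of C] XC by linarith
    then have "0 \<le> f (X \<inter> C)" using XC by (intro nonneg) auto
    moreover have "0 \<le> f (X \<union> C)" using XC card_Un by (intro nonneg) auto
    \<comment> \<open>by submodularity and nonnegativity the union of two zero sets is again a zero set\<close>
    ultimately have "f (X \<union> C) = 0" using submod[OF XC(1,2)] XC(5,6) by linarith
    then have "X \<union> C \<in> Z" unfolding Z_def using XC card_Un by auto
    then have "card (X \<union> C) \<le> card C" by (rule C_max)
    then have "C = X \<union> C" using card_seteq[of "X \<union> C" C] fin by auto
    then show ?thesis by blast
  qed
  show ?thesis
  proof (rule that)
    show "C \<subseteq> U" "card C < k" "f C = 0" using C(1) small unfolding Z_def by auto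
    show "X \<subseteq> C" if "X \<subseteq> U" "card X \<le> 2 * k" "f X = 0" for X
      using absorb that unfolding Z_def by blast
  qed
qed

lemma exists_image_outside_tight_sets:
  assumes gf: "graph_family V t G" and sj: "s_joined V t G s" and "finite VH"
    and size: "int (card VH) + 2 * int s * int D + 3 * int s \<le> int (card V)"
    and good: "good V G t (2 * s) D VH EH col R \<phi>"
    and a: "v \<in> V" "c \<in> {1..t}" "deg_pre VH EH col \<phi> c v < D"
  obtains y where "y \<in> Gamma G V {(v, c)}" "y \<notin> \<phi> ` VH"
    "\<And>X. X \<subseteq> V \<times> {1..t} \<Longrightarrow> card X \<le> 2 * s \<Longrightarrow> Rval V G D VH EH col R \<phi> X = 0
       \<Longrightarrow> (v, c) \<notin> X \<Longrightarrow> y \<notin> Gamma G V X"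
proof -
  let ?f = "Rval V G D VH EH col R \<phi>"
  let ?U = "V \<times> {1..t} - {(v, c)}"
  have fV: "finite V" using gf by (simp add: graph_family_def)
  have fU: "finite ?U" using fV by simp
  have nonneg: "0 \<le> ?f X" if "X \<subseteq> V \<times> {1..t}" "card X \<le> 2 * s" for X
    using good that unfolding good_def by blast
  have small: "card X < s" if "X \<subseteq> V \<times> {1..t}" "card X \<le> 2 * s" "?f X = 0" for X
  proof (rule ccontr)
    assume "\<not> card X < s"
    then have "1 \<le> ?f X" using Rval_ge_one[OF gf sj \<open>finite VH\<close> that(1) _ that(2) size] by simp
    then show False using that(3) by simp
  qed
  obtain C where C: "C \<subseteq> ?U" "card C < s" "?f C = 0"
    and greatest: "\<And>X. X \<subseteq> ?U \<Longrightarrow> card X \<le> 2 * s \<Longrightarrow> ?f X = 0 \<Longrightarrow> X \<subseteq> C"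
  proof (rule greatest_zero_set_of_submodular[OF fU, where k = s])
    show "?f {} = 0" by (simp add: Rval_def Gamma_def)
    show "?f (X \<union> Y) + ?f (X \<inter> Y) \<le> ?f X + ?f Y" if "X \<subseteq> ?U" "Y \<subseteq> ?U" for X Y
      using Rval_submodular[OF fV] that fU finite_subset by metis
    show "0 \<le> ?f X" if "X \<subseteq> ?U" "card X \<le> 2 * s" for X
      using nonneg that by blast
    show "card X < s" if "X \<subseteq> ?U" "card X \<le> 2 * s" "?f X = 0" for X
      using small that by blast
  qed blast
  have fC: "finite C" using C(1) fU finite_subset by blast
  \<comment> \<open>adding \<open>(v, c)\<close> to the tight set \<open>C\<close> must bring in a new free neighbour of \<open>v\<close>\<close>
  have "insert (v, c) C \<subseteq> V \<times> {1..t}" using C(1) a by auto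
  moreover have "card (insert (v, c) C) \<le> 2 * s" using C(2) fC by (simp add: card_insert_if)
  ultimately have "0 \<le> ?f (insert (v, c) C)" by (rule nonneg)
  moreover have "(v, c) \<notin> C" using C(1) by blast
  ultimately have "0 < card (Gamma G V {(v, c)} - Gamma G V C - \<phi> ` VH)"
    using Rval_insert_le[OF fV fC, of v c G D VH EH col R \<phi>] C(3) a(3) by linarith
  then obtain y where y: "y \<in> Gamma G V {(v, c)}" "y \<notin> Gamma G V C" "y \<notin> \<phi> ` VH"
    by (auto simp: card_gt_0_iff)
  have "y \<notin> Gamma G V X"
    if "X \<subseteq> V \<times> {1..t}" "card X \<le> 2 * s" "?f X = 0" "(v, c) \<notin> X" for X
    using greatest[of X] that Gamma_mono[of X C G V] y(2) by auto
  then show ?thesis using that y by blast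
qed

subsection \<open>Attaching a leaf\<close>

lemma degc_insert:
  assumes "finite W" "x \<in> W" "h \<notin> W"
  shows "degc (insert h W) (induced E (insert h W)) col i x
       = degc W (induced E W) col i x + (if E x h \<and> col x h = i then 1 else 0)"
proof -
  let ?S = "{z\<in>W. induced E W x z \<and> col x z = i}"
  have eq: "{z\<in>insert h W. induced E (insert h W) x z \<and> col x z = i}
      = (if E x h \<and> col x h = i then insert h ?S else ?S)"
    using assms(2) by (auto simp: induced_def)
  have "card (insert h ?S) = Suc (card ?S)" using assms(1,3) by (intro card_insert_disjoint) auto
  then show ?thesis unfolding degc_def eq by simp
qed

lemma degc_induced_less:
  assumes "finite VH" "W \<subseteq> VH" "h \<in> VH - W" "E p h" "col p h = c"
  shows "degc W (induced E W) col c p < degc VH E col c p"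
proof -
  let ?S = "{z\<in>W. induced E W p z \<and> col p z = c}"
  have "insert h ?S \<subseteq> {z\<in>VH. E p z \<and> col p z = c}"
    using assms by (auto simp: induced_def)
  moreover have "finite ?S" using assms(1,2) finite_subset[of ?S VH] by auto
  moreover have "h \<notin> ?S" using assms(3) by auto
  ultimately have "Suc (card ?S) \<le> card {z\<in>VH. E p z \<and> col p z = c}"
    using assms(1) card_mono[of "{z\<in>VH. E p z \<and> col p z = c}" "insert h ?S"] by simp
  then show ?thesis unfolding degc_def by simp
qed

lemma deg_pre_fun_upd:
  assumes "inj_on \<phi> W" "h \<notin> W" "y \<notin> \<phi> ` W"
  shows "deg_pre (insert h W) E col (\<phi>(h := y)) i u
       = (if u = y then degc (insert h W) E col i h
          else if u \<in> \<phi> ` W then degc (insert h W) E col i (the_inv_into W \<phi> u) else 0)"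
proof -
  have img: "\<phi>(h := y) ` insert h W = insert y (\<phi> ` W)" using assms(2) by auto
  have inj: "inj_on (\<phi>(h := y)) (insert h W)" using assms by (auto simp: inj_on_def)
  have "the_inv_into (insert h W) (\<phi>(h := y)) y = h"
    using the_inv_into_f_f[OF inj, of h] by simp
  moreover have "the_inv_into (insert h W) (\<phi>(h := y)) (\<phi> x) = the_inv_into W \<phi> (\<phi> x)"
    if "x \<in> W" for x
  proof -
    have "(\<phi>(h := y)) x = \<phi> x" using that assms(2) by auto
    then show ?thesis
      using the_inv_into_f_f[OF inj, of x] the_inv_into_f_f[OF assms(1) that] that by simp
  qed
  ultimately show ?thesis unfolding deg_pre_def img using assms(3) by auto
qed

lemma degc_leaf:
  assumes "\<And>z. induced E W h z \<longleftrightarrow> z = p"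
  shows "degc W (induced E W) col i h = (if i = col h p then 1 else 0)"
proof -
  have "p \<in> W" using assms[of p] by (simp add: induced_def)
  then have "{z\<in>W. induced E W h z \<and> col h z = i} = (if i = col h p then {p} else {})"
    using assms by auto
  then show ?thesis unfolding degc_def by simp
qed

lemma deg_pre_attach_leaf:
  assumes cg: "colored_graph t VH EH col" and "W \<subseteq> VH" "h \<in> W"
    and nb: "\<And>z. induced EH W h z \<longleftrightarrow> z = p"
    and inj: "inj_on \<phi> (W - {h})" and y: "y \<notin> \<phi> ` (W - {h})"
  shows "deg_pre W (induced EH W) col (\<phi>(h := y)) i u
       = deg_pre (W - {h}) (induced EH (W - {h})) col \<phi> i u
         + (if (u, i) = (\<phi> p, col h p) then 1 else 0) + (if (u, i) = (y, col h p) then 1 else 0)"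
proof -
  let ?W0 = "W - {h}"
  have W: "insert h ?W0 = W" using \<open>h \<in> W\<close> by blast
  have "EH h p" "p \<in> W" using nb[of p] by (auto simp: induced_def)
  then have p: "p \<in> ?W0" "col p h = col h p" using cg unfolding colored_graph_def by auto
  have fin: "finite ?W0" using cg \<open>W \<subseteq> VH\<close> finite_subset unfolding colored_graph_def by blast
  have nb': "EH x h \<longleftrightarrow> x = p" if "x \<in> ?W0" for x
    using nb[of x] that \<open>h \<in> W\<close> cg unfolding colored_graph_def induced_def by blast
  have new: "deg_pre W (induced EH W) col (\<phi>(h := y)) i u
      = (if u = y then degc W (induced EH W) col i h
         else if u \<in> \<phi> ` ?W0 then degc W (induced EH W) col i (the_inv_into ?W0 \<phi> u) else 0)"
    using deg_pre_fun_upd[OF inj _ y, where h = h and E = "induced EH W"] unfolding W by simp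
  consider "u = y" | x where "x \<in> ?W0" "u = \<phi> x" | "u \<noteq> y" "u \<notin> \<phi> ` ?W0" by blast
  then show ?thesis
  proof cases
    case 1
    then show ?thesis using new y p(1) degc_leaf[OF nb] unfolding deg_pre_def by auto
  next
    case 2
    have "\<phi> x = \<phi> p \<longleftrightarrow> x = p" using inj 2(1) p(1) by (meson inj_on_eq_iff)
    moreover have "degc W (induced EH W) col i x
        = degc ?W0 (induced EH ?W0) col i x + (if EH x h \<and> col x h = i then 1 else 0)"
      using degc_insert[OF fin 2(1), of h EH col i] unfolding W by simp
    ultimately show ?thesis
      using new 2 y nb' p the_inv_into_f_f[OF inj 2(1)] unfolding deg_pre_def by auto
  next
    case 3
    then show ?thesis using new p(1) unfolding deg_pre_def by auto
  qed
qed

lemma Pset_attach_leaf: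
  assumes "h \<in> W" "h \<notin> R" and "\<And>x. x \<in> W - {h} - R \<Longrightarrow> pcol E1 col R x = pcol E0 col R x"
  shows "Pset W E1 col R (\<phi>(h := y)) = insert (y, pcol E1 col R h) (Pset (W - {h}) E0 col R \<phi>)"
  unfolding Pset_def using assms by force

lemma Rval_add_image_point:
  assumes "finite V" "finite X"
    and img: "\<phi>1 ` VH1 = insert y (\<phi> ` VH)" "y \<notin> \<phi> ` VH"
    and deg: "\<And>u i. deg_pre VH1 E1 col \<phi>1 i u
       = deg_pre VH E col \<phi> i u + (if (u, i) = a then 1 else 0) + (if (u, i) = b then 1 else 0)"
    and P: "Pset VH1 E1 col R1 \<phi>1 = insert b (Pset VH E col R \<phi>)" "b \<notin> Pset VH E col R \<phi>"
  shows "Rval V G D VH1 E1 col R1 \<phi>1 X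
       = Rval V G D VH E col R \<phi> X - (if y \<in> Gamma G V X then 1 else 0) + (if a \<in> X then 1 else 0)"
  \<comment> \<open>the contributions of \<open>b\<close> to the degree sum and to the \<open>P\<close>-term cancel\<close>
proof -
  let ?A = "Gamma G V X - \<phi> ` VH"
  have "finite ?A" using assms(1) Gamma_subset finite_subset by (metis finite_Diff)
  moreover have "Gamma G V X - \<phi>1 ` VH1 = ?A - {y}" using img by auto
  ultimately have "int (card (Gamma G V X - \<phi>1 ` VH1))
      = int (card ?A) - (if y \<in> Gamma G V X then 1 else 0)"
    using img(2) card_gt_0_iff[of ?A] by (auto simp: card_Diff_singleton_if of_nat_diff)
  moreover have "(\<Sum>(u, i)\<in>X. int D - int (deg_pre VH1 E1 col \<phi>1 i u))
      = (\<Sum>(u, i)\<in>X. int D - int (deg_pre VH E col \<phi> i u))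
        - (if a \<in> X then 1 else 0) - (if b \<in> X then 1 else 0)"
  proof -
    have "(\<lambda>(u, i). int D - int (deg_pre VH1 E1 col \<phi>1 i u))
        = (\<lambda>z. (\<lambda>(u, i). int D - int (deg_pre VH E col \<phi> i u)) z
               - (if z = a then 1 else 0) - (if z = b then 1 else 0))"
      by (auto simp: deg)
    then show ?thesis using assms(2) by (simp add: sum_subtractf)
  qed
  moreover have "int (card (Pset VH1 E1 col R1 \<phi>1 \<inter> X))
      = int (card (Pset VH E col R \<phi> \<inter> X)) + (if b \<in> X then 1 else 0)"
    using P assms(2) by (simp add: Int_insert_left)
  ultimately show ?thesis unfolding Rval_def by linarith
qed

lemma good_if_Rval_shift:
  assumes good: "good V G t k D VH E col R \<phi>"
    and shift: "\<And>X. X \<subseteq> V \<times> {1..t} \<Longrightarrow> Rval V G D VH1 E1 col R1 \<phi>1 X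
       = Rval V G D VH E col R \<phi> X - (if y \<in> Gamma G V X then 1 else 0) + (if a \<in> X then 1 else 0)"
    and "y \<in> Gamma G V {a}"
    and tight: "\<And>X. X \<subseteq> V \<times> {1..t} \<Longrightarrow> card X \<le> k \<Longrightarrow> Rval V G D VH E col R \<phi> X = 0
       \<Longrightarrow> a \<notin> X \<Longrightarrow> y \<notin> Gamma G V X"
  shows "good V G t k D VH1 E1 col R1 \<phi>1"
  unfolding good_def
proof (intro allI impI)
  fix X assume X: "X \<subseteq> V \<times> {1..t} \<and> card X \<le> k"
  have "0 \<le> Rval V G D VH E col R \<phi> X" using good X unfolding good_def by blast
  moreover have "y \<in> Gamma G V X" if "a \<in> X"
    using Gamma_mono[of "{a}" X G V] \<open>y \<in> Gamma G V {a}\<close> that by blast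
  ultimately show "0 \<le> Rval V G D VH1 E1 col R1 \<phi>1 X"
    using shift[of X] tight[of X] X by (cases "a \<in> X") fastforce+
qed

lemma embedding_attach_leaf:
  assumes gf: "graph_family V t G" and cg: "colored_graph t VH EH col" and "h \<in> W"
    and nb: "\<And>z. induced EH W h z \<longleftrightarrow> z = p"
    and emb: "embedding V G (W - {h}) (induced EH (W - {h})) col \<phi>"
    and y: "y \<in> V" "G (col h p) (\<phi> p) y" "y \<notin> \<phi> ` (W - {h})"
  shows "embedding V G W (induced EH W) col (\<phi>(h := y))"
  unfolding embedding_def
proof (intro conjI allI impI)
  have W: "W = insert h (W - {h})" using \<open>h \<in> W\<close> by blast
  have "inj_on \<phi> (W - {h})" "\<phi> ` (W - {h}) \<subseteq> V" using emb unfolding embedding_def by auto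
  then show "inj_on (\<phi>(h := y)) W" "\<phi>(h := y) ` W \<subseteq> V"
    using y by (subst W; auto simp: inj_on_def)+
next
  fix a b assume ab: "induced EH W a b"
  have "EH h p" "p \<in> W" using nb[of p] by (auto simp: induced_def)
  then have p: "p \<noteq> h" "col p h = col h p" "col h p \<in> {1..t}"
    using cg unfolding colored_graph_def by auto
  have "G (col h p) y (\<phi> p)" using gf y(2) p(3) unfolding graph_family_def by blast
  moreover have "a = h \<Longrightarrow> b = p" "b = h \<Longrightarrow> a = p"
    using ab nb cg unfolding colored_graph_def induced_def by blast+
  moreover have "G (col a b) (\<phi> a) (\<phi> b)" if "a \<noteq> h" "b \<noteq> h"
    using emb ab that unfolding embedding_def induced_def by auto
  ultimately show "G (col a b) ((\<phi>(h := y)) a) ((\<phi>(h := y)) b)"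
    using y(2) p by (cases "a = h"; cases "b = h") auto
qed

locale embedding_setup =
  fixes V :: "'v set" and G :: "nat \<Rightarrow> 'v \<Rightarrow> 'v \<Rightarrow> bool" and t s D :: nat
    and VH :: "'h set" and EH :: "'h \<Rightarrow> 'h \<Rightarrow> bool" and col :: "'h \<Rightarrow> 'h \<Rightarrow> nat"
    and R :: "'h set"
  assumes graph_family: "graph_family V t G"
    and s_joined: "s_joined V t G s"
    and colored_graph: "colored_graph t VH EH col"
    and rooted: "rooted VH EH R"
    and max_mono_deg: "max_mono_deg_le VH EH col t D"
    and size: "int (card VH) \<le> int (card V) - 2 * int s * int D - 3 * int s"
begin

lemma edge:
  assumes "EH a b"
  shows "a \<noteq> b" "EH b a" "col b a = col a b" "col a b \<in> {1..t}"
  using colored_graph assms unfolding colored_graph_def by metis+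

lemma Pset_extend_leaf:
  assumes lp: "leaf_pruned VH EH R W" and h: "h \<in> W - R" "deg W (induced EH W) h = 1"
    and nb: "\<And>z. induced EH W h z \<longleftrightarrow> z = p"
  shows "Pset W (induced EH W) col R (\<phi>(h := y))
       = insert (y, col h p) (Pset (W - {h}) (induced EH (W - {h})) col R \<phi>)"
proof -
  have "EH h p" "p \<in> W" using nb[of p] by (auto simp: induced_def)
  then have p: "p \<in> W - {h}" using edge(1) by blast
  have "leaf_pruned VH EH R (W - {h})" using leaf_pruned.step[OF lp h] .
  then obtain ps where "root_path (induced EH (W - {h})) R p ps"
    using leaf_pruned_root_path[OF colored_graph rooted] p by blast
  \<comment> \<open>the root path of \<open>p\<close> avoids \<open>h\<close>, so prepending \<open>h\<close> gives the root path of \<open>h\<close>\<close>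
  then have "root_path (induced EH W) R p ps" "h \<notin> set ps"
    using root_path_remove_leaf[OF edge(2) h(2) _ p] root_path_induced_iff[of p "W - {h}"] p h(1)
    by auto
  then have "parent (induced EH W) R h = p" using parent_of_leaf[of h R "induced EH W" p ps] nb h(1) by blast
  then have "pcol (induced EH W) col R h = col h p" unfolding pcol_def by simp
  moreover have "pcol (induced EH W) col R x = pcol (induced EH (W - {h})) col R x"
    if "x \<in> W - {h} - R" for x
    unfolding pcol_def using parent_remove_leaf[OF edge(2) h(2)] that h(1) by auto
  then have "Pset W (induced EH W) col R (\<phi>(h := y))
      = insert (y, pcol (induced EH W) col R h) (Pset (W - {h}) (induced EH (W - {h})) col R \<phi>)"
    using h(1) by (intro Pset_attach_leaf) auto
  ultimately show ?thesis by simp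
qed

lemma deg_pre_leaf_neighbour_less:
  assumes "W \<subseteq> VH" "h \<in> W" "EH h p" "p \<in> W - {h}" "inj_on \<phi> (W - {h})"
  shows "deg_pre (W - {h}) (induced EH (W - {h})) col \<phi> (col h p) (\<phi> p) < D"
proof -
  have "finite VH" using colored_graph unfolding colored_graph_def by blast
  have "deg_pre (W - {h}) (induced EH (W - {h})) col \<phi> (col h p) (\<phi> p)
      = degc (W - {h}) (induced EH (W - {h})) col (col h p) p"
    using the_inv_into_f_f[OF assms(5,4)] assms(4) unfolding deg_pre_def by simp
  also have "\<dots> < degc VH EH col (col h p) p"
    using degc_induced_less[OF \<open>finite VH\<close>, of "W - {h}" h EH p col] edge[OF assms(3)] assms(1,2)
    by auto
  also have "\<dots> \<le> D"
    using max_mono_deg edge(4)[OF assms(3)] assms(1,4) unfolding max_mono_deg_le_def by blast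
  finally show ?thesis .
qed

lemma Rval_extend_leaf:
  assumes lp: "leaf_pruned VH EH R W" and h: "h \<in> W - R" "deg W (induced EH W) h = 1"
    and nb: "\<And>z. induced EH W h z \<longleftrightarrow> z = p"
    and inj: "inj_on \<phi> (W - {h})" and y: "y \<notin> \<phi> ` (W - {h})" and X: "X \<subseteq> V \<times> {1..t}"
  shows "Rval V G D W (induced EH W) col R (\<phi>(h := y)) X
       = Rval V G D (W - {h}) (induced EH (W - {h})) col R \<phi> X
         - (if y \<in> Gamma G V X then 1 else 0) + (if (\<phi> p, col h p) \<in> X then 1 else 0)"
proof (rule Rval_add_image_point)
  show fV: "finite V" using graph_family unfolding graph_family_def by blast
  show "finite X" using X fV by (meson finite_SigmaI finite_atLeastAtMost finite_subset)
  show "\<phi>(h := y) ` W = insert y (\<phi> ` (W - {h}))" using h(1) by auto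
  show "y \<notin> \<phi> ` (W - {h})" by (fact y)
  show "Pset W (induced EH W) col R (\<phi>(h := y))
      = insert (y, col h p) (Pset (W - {h}) (induced EH (W - {h})) col R \<phi>)"
    by (rule Pset_extend_leaf[OF lp h nb])
  show "(y, col h p) \<notin> Pset (W - {h}) (induced EH (W - {h})) col R \<phi>"
    using y unfolding Pset_def by auto
  show "deg_pre W (induced EH W) col (\<phi>(h := y)) i u
      = deg_pre (W - {h}) (induced EH (W - {h})) col \<phi> i u
        + (if (u, i) = (\<phi> p, col h p) then 1 else 0) + (if (u, i) = (y, col h p) then 1 else 0)"
    for u i
    using deg_pre_attach_leaf[OF colored_graph leaf_pruned_subset[OF lp] _ nb inj y] h(1) by blast
qed

lemma extend_leaf:
  assumes lp: "leaf_pruned VH EH R W" and h: "h \<in> W - R" "deg W (induced EH W) h = 1"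
    and emb: "embedding V G (W - {h}) (induced EH (W - {h})) col \<phi>"
    and good: "good V G t (2 * s) D (W - {h}) (induced EH (W - {h})) col R \<phi>"
  obtains y where "embedding V G W (induced EH W) col (\<phi>(h := y))"
    "good V G t (2 * s) D W (induced EH W) col R (\<phi>(h := y))"
proof -
  obtain p where nb: "\<And>z. induced EH W h z \<longleftrightarrow> z = p"
    using leaf_unique_neighbour[OF h(2)] by blast
  have "EH h p" "p \<in> W" using nb[of p] by (auto simp: induced_def)
  then have p: "p \<in> W - {h}" "col h p \<in> {1..t}" using edge[of h p] by auto
  have WVH: "W \<subseteq> VH" using leaf_pruned_subset[OF lp] .
  have fin: "finite VH" "finite (W - {h})"
    using colored_graph WVH finite_subset unfolding colored_graph_def by auto
  have inj: "inj_on \<phi> (W - {h})" and img: "\<phi> ` (W - {h}) \<subseteq> V"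
    using emb unfolding embedding_def by auto
  have "card (W - {h}) \<le> card VH" using WVH fin(1) by (meson Diff_subset card_mono subset_trans)
  then have size0: "int (card (W - {h})) + 2 * int s * int D + 3 * int s \<le> int (card V)"
    using size by linarith
  obtain y where y: "y \<in> Gamma G V {(\<phi> p, col h p)}" "y \<notin> \<phi> ` (W - {h})"
    and tight: "\<And>X. X \<subseteq> V \<times> {1..t} \<Longrightarrow> card X \<le> 2 * s
       \<Longrightarrow> Rval V G D (W - {h}) (induced EH (W - {h})) col R \<phi> X = 0
       \<Longrightarrow> (\<phi> p, col h p) \<notin> X \<Longrightarrow> y \<notin> Gamma G V X"
    using exists_image_outside_tight_sets[OF graph_family s_joined fin(2) size0 good _ p(2)
        deg_pre_leaf_neighbour_less[OF WVH _ \<open>EH h p\<close> p(1) inj]] img p(1) h(1) by blast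
  have "G (col h p) (\<phi> p) y" "y \<in> V"
    using y(1) graph_family p(2) unfolding Gamma_def graph_family_def by auto
  then have "embedding V G W (induced EH W) col (\<phi>(h := y))"
    using embedding_attach_leaf[OF graph_family colored_graph _ nb emb] y(2) h(1) by blast
  moreover have "good V G t (2 * s) D W (induced EH W) col R (\<phi>(h := y))"
    using good_if_Rval_shift[OF good Rval_extend_leaf[OF lp h nb inj y(2)] y(1) tight] by blast
  ultimately show ?thesis using that by blast
qed

lemma extend_along_pruning:
  assumes "leaf_pruned VH EH R W"
  shows "embedding V G W (induced EH W) col \<psi> \<Longrightarrow> good V G t (2 * s) D W (induced EH W) col R \<psi>
    \<Longrightarrow> \<exists>\<phi>. embedding V G VH EH col \<phi> \<and> good V G t (2 * s) D VH EH col R \<phi> \<and> (\<forall>x\<in>W. \<phi> x = \<psi> x)"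
  using assms
proof (induction arbitrary: \<psi> rule: leaf_pruned.induct)
  case refl
  then show ?case using induced_carrier[OF colored_graph] by auto
next
  case (step W h)
  then obtain y where "embedding V G W (induced EH W) col (\<psi>(h := y))"
    "good V G t (2 * s) D W (induced EH W) col R (\<psi>(h := y))"
    using extend_leaf by blast
  then obtain \<phi> where "embedding V G VH EH col \<phi>" "good V G t (2 * s) D VH EH col R \<phi>"
    "\<forall>x\<in>W. \<phi> x = (\<psi>(h := y)) x"
    using step.IH by blast
  then show ?case by (intro exI[of _ \<phi>]) auto
qed

end

theorem lemma2p9:
  fixes V :: "'v set" and G :: "nat \<Rightarrow> 'v \<Rightarrow> 'v \<Rightarrow> bool" and s t D :: nat
    and VH :: "'h set" and EH :: "'h \<Rightarrow> 'h \<Rightarrow> bool" and col :: "'h \<Rightarrow> 'h \<Rightarrow> nat"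
    and R V0 :: "'h set" and \<phi>0 :: "'h \<Rightarrow> 'v"
  assumes "s \<ge> 1" and "t \<ge> 1" and "D \<ge> 1"
    and "graph_family V t G"
    and "s_joined V t G s"
    and "colored_graph t VH EH col"
    and "rooted VH EH R"
    and "max_mono_deg_le VH EH col t D"
    and "int (card VH) \<le> int (card V) - 2 * int s * int D - 3 * int s"
    and "leaf_pruned VH EH R V0"
    and "embedding V G V0 (induced EH V0) col \<phi>0"
    and "good V G t (2 * s) D V0 (induced EH V0) col R \<phi>0"
  shows "\<exists>\<phi>. embedding V G VH EH col \<phi> \<and> good V G t (2 * s) D VH EH col R \<phi> \<and>
             (\<forall>x\<in>V0. \<phi> x = \<phi>0 x)"
proof -
  \<comment> \<open>\<open>s \<ge> 1\<close> already follows from \<open>s\<close>-joinedness.\<close>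
  interpret embedding_setup V G t s D VH EH col R
    using assms(4-9) by (rule embedding_setup.intro)
  show ?thesis using extend_along_pruning[OF assms(10-12)] .
qed

end
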